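(* Let $G=(V,D,B)$ be a simple mixed graph. Then the set of covariance matrices $$\mathcal{M}_G=\{(I-\Lambda)^{-T}\Omega(I-\Lambda)^{-1}:\ \Lambda\in\mathbb{R}^D_{\mathrm{reg}},\ \Omega\in \mathit{PD}(B)\}$$ has dimension $\dim(\mathcal{M}_G)=|V|+|D|+|B|$.
   Context: A mixed graph with vertex set $V$ (finite) is a triple $G=(V,D,B)$, where $D$ is a set of ordered pairs $(i,j)$ with $i\neq j$ (directed edges $i\to j$) and $B$ is a set of unordered pairs $\{i,j\}$ with $i\ne j$ (bidirected edges $i\leftrightarrow j$). $G$ is simple if any two distinct nodes are joined by at most one edge of any type (so $i\to j$ and $j\to i$ cannot both be present, and a bidirected edge cannot coexist with a directed edge between the same pair); directed cycles of length $\ge 3$ are allowed. $\mathbb{R}^D$ is the set of real $V\times V$ matrices $\Lambda=(\lambda_{ij})$ with $\lambda_{ij}=0$ whenever $(i,j)\notin D$; $\mathbb{R}^D_{\mathrm{reg}}$ is the subset with $I-\Lambda$ invertible. $\mathit{PD}(B)$ is the set of positive definite symmetric $V\times V$ matrices $\Omega=(\omega_{ij})$ with $\omega_{ij}=0$ whenever $i\neq j$ and $\{i,j\}\notin B$. Dimension is the dimension of $\mathcal{M}_G$ as a (semialgebraic) subset of the space of symmetric $V\times V$ matrices. *)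

theory Defs
  imports "HOL-Analysis.Analysis"
begin

text \<open>Vertex set V is a finite type 'v. Directed edges D: ordered pairs; bidirected
edges B: unordered pairs, represented as two-element sets.\<close>

definition simple_mixed_graph :: "('v \<times> 'v) set \<Rightarrow> 'v set set \<Rightarrow> bool" where
  "simple_mixed_graph D B \<longleftrightarrow>
     (\<forall>(i,j)\<in>D. i \<noteq> j \<and> (j,i) \<notin> D \<and> {i,j} \<notin> B) \<and>
     (\<forall>e\<in>B. \<exists>i j. i \<noteq> j \<and> e = {i,j})"

definition RD :: "('v::finite \<times> 'v) set \<Rightarrow> (real^'v^'v) set" where
  "RD D = {L. \<forall>i j. (i,j) \<notin> D \<longrightarrow> L$i$j = 0}"

definition RD_reg :: "('v::finite \<times> 'v) set \<Rightarrow> (real^'v^'v) set" where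
  "RD_reg D = {L \<in> RD D. invertible (mat 1 - L)}"

definition PD :: "'v::finite set set \<Rightarrow> (real^'v^'v) set" where
  "PD B = {W. transpose W = W \<and> (\<forall>x. x \<noteq> 0 \<longrightarrow> x \<bullet> (W *v x) > 0) \<and>
              (\<forall>i j. i \<noteq> j \<and> {i,j} \<notin> B \<longrightarrow> W$i$j = 0)}"

definition model :: "('v::finite \<times> 'v) set \<Rightarrow> 'v set set \<Rightarrow> (real^'v^'v) set" where
  "model D B = {transpose (matrix_inv (mat 1 - L)) ** W ** matrix_inv (mat 1 - L) | L W.
                 L \<in> RD_reg D \<and> W \<in> PD B}"

text \<open>Dimension of a (semialgebraic) set of matrices, in the o-minimal / semialgebraic
sense: the largest number of coordinates such that the coordinate projection onto them
has nonempty interior.\<close>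

definition proj_has_interior :: "(real^'v^'v) set \<Rightarrow> ('v \<times> 'v) set \<Rightarrow> bool" where
  "proj_has_interior S I \<longleftrightarrow>
     (\<exists>M0\<in>S. \<exists>e>0. \<forall>f :: 'v \<times> 'v \<Rightarrow> real.
        (\<forall>k\<in>I. \<bar>f k - M0 $ fst k $ snd k\<bar> < e) \<longrightarrow>
        (\<exists>M\<in>S. \<forall>k\<in>I. M $ fst k $ snd k = f k))"

definition sa_dim :: "(real^'v::finite^'v) set \<Rightarrow> nat" where
  "sa_dim S = (GREATEST d. \<exists>I. card I = d \<and> proj_has_interior S I)"

end

theory Submission
  imports Defs
begin

text \<open>Fix an injective ranking \<open>r\<close> of the vertices; it orients every unordered pair.

  Upper bound: every matrix of the model is \<open>(I - \<Lambda>)\<^sup>-\<^sup>T \<Omega> (I - \<Lambda>)\<^sup>-\<^sup>1\<close>, by Cramer's rule a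
  differentiable function of the entries of \<open>\<Lambda>\<close> on \<open>D\<close> and of \<open>\<Omega>\<close> on the diagonal and on the
  \<open>r\<close>-oriented bidirected edges, \<open>|V| + |D| + |B|\<close> numbers in all. A differentiable image of a
  lower-dimensional space is negligible, so no projection onto more coordinates has interior.

  Lower bound: \<open>\<Sigma>\<close> lies in the model iff \<open>\<Omega> = (I - \<Lambda>)\<^sup>T \<Sigma> (I - \<Lambda>)\<close> is positive definite and
  vanishes off \<open>B\<close> for some \<open>\<Lambda>\<close> supported on \<open>D\<close>. Prescribe the entries of \<open>\<Sigma>\<close> on the
  diagonal, on the reversed directed edges and on the oriented bidirected edges. The remaining
  unknowns, \<open>\<Lambda>\<close> and the entries of \<open>\<Sigma>\<close> at non-adjacent pairs, are determined by the
  equations \<open>\<Omega>\<^sub>i\<^sub>j = 0\<close> for directed edges and non-adjacent pairs, whose linearization at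
  \<open>\<Sigma> = I, \<Lambda> = 0\<close> is invertible. By the open mapping theorem every small perturbation of the
  prescribed entries of \<open>I\<close> is attained, and \<open>\<Omega>\<close> stays positive definite.\<close>

section \<open>Differentiable matrix functions\<close>

lemma has_derivative_matrixI:
  fixes f :: "'a::real_normed_vector \<Rightarrow> real^'n^'m"
  assumes "\<And>i j. ((\<lambda>x. f x $ i $ j) has_derivative (\<lambda>h. f' h $ i $ j)) (at a within S)"
  shows "(f has_derivative f') (at a within S)"
proof (subst has_derivative_componentwise_within, intro ballI)
  fix b :: "real^'n^'m" assume "b \<in> Basis"
  then obtain i j where "b = axis i (axis j 1)" by (auto simp: Basis_vec_def)
  then show "((\<lambda>x. f x \<bullet> b) has_derivative (\<lambda>x. f' x \<bullet> b)) (at a within S)"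
    using assms[of i j] by (simp add: inner_axis)
qed

lemma has_derivative_matrix_nth:
  fixes f :: "'a::real_normed_vector \<Rightarrow> real^'n^'m"
  assumes "(f has_derivative f') F"
  shows "((\<lambda>x. f x $ i $ j) has_derivative (\<lambda>h. f' h $ i $ j)) F"
  using bounded_linear.has_derivative[OF bounded_linear_compose[OF bounded_linear_vec_nth
        bounded_linear_vec_nth] assms] .

lemma differentiable_matrixI:
  fixes f :: "'a::real_normed_vector \<Rightarrow> real^'n^'m"
  assumes "\<And>i j. (\<lambda>x. f x $ i $ j) differentiable (at a within S)"
  shows "f differentiable (at a within S)"
proof -
  obtain f' where "((\<lambda>x. f x $ i $ j) has_derivative f' i j) (at a within S)" for i j
    using assms unfolding differentiable_def by metis
  then have "(f has_derivative (\<lambda>h. \<chi> i j. f' i j h)) (at a within S)"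
    by (intro has_derivative_matrixI) simp
  then show ?thesis unfolding differentiable_def by blast
qed

lemma differentiable_matrix_nth:
  fixes f :: "'a::real_normed_vector \<Rightarrow> real^'n^'m"
  assumes "f differentiable F"
  shows "(\<lambda>x. f x $ i $ j) differentiable F"
  using assms has_derivative_matrix_nth unfolding differentiable_def by blast

lemma has_derivative_matrix_mult:
  fixes f :: "'a::real_normed_vector \<Rightarrow> real^'k^'m" and g :: "'a \<Rightarrow> real^'n^'k"
  assumes f: "(f has_derivative f') (at a within S)" and g: "(g has_derivative g') (at a within S)"
  shows "((\<lambda>x. f x ** g x) has_derivative (\<lambda>h. f a ** g' h + f' h ** g a)) (at a within S)"
proof (rule has_derivative_matrixI)
  fix i j
  have "((\<lambda>x. \<Sum>k\<in>UNIV. f x $ i $ k * g x $ k $ j) has_derivative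
        (\<lambda>h. \<Sum>k\<in>UNIV. f a $ i $ k * g' h $ k $ j + f' h $ i $ k * g a $ k $ j)) (at a within S)"
    by (intro has_derivative_sum has_derivative_mult has_derivative_matrix_nth f g)
  then show "((\<lambda>x. (f x ** g x) $ i $ j) has_derivative
      (\<lambda>h. (f a ** g' h + f' h ** g a) $ i $ j)) (at a within S)"
    by (simp add: matrix_matrix_mult_def sum.distrib)
qed

lemma differentiable_matrix_mult:
  fixes f :: "'a::real_normed_vector \<Rightarrow> real^'k^'m" and g :: "'a \<Rightarrow> real^'n^'k"
  assumes "f differentiable (at a within S)" "g differentiable (at a within S)"
  shows "(\<lambda>x. f x ** g x) differentiable (at a within S)"
  using assms has_derivative_matrix_mult unfolding differentiable_def by blast

lemma has_derivative_transpose: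
  fixes f :: "'a::real_normed_vector \<Rightarrow> real^'n^'m"
  assumes "(f has_derivative f') (at a within S)"
  shows "((\<lambda>x. transpose (f x)) has_derivative (\<lambda>h. transpose (f' h))) (at a within S)"
  by (rule has_derivative_matrixI) (simp add: transpose_def has_derivative_matrix_nth[OF assms])

lemma differentiable_transpose:
  fixes f :: "'a::real_normed_vector \<Rightarrow> real^'n^'m"
  assumes "f differentiable (at a within S)"
  shows "(\<lambda>x. transpose (f x)) differentiable (at a within S)"
  using assms has_derivative_transpose unfolding differentiable_def by blast

lemma transpose_uminus: "transpose (- A) = - transpose (A :: 'a::ring_1^'n^'m)"
  by (simp add: transpose_def vec_eq_iff)

lemma real_polynomial_function_matrix_nth:
  "real_polynomial_function (\<lambda>X::real^'n^'m. X $ i $ j)"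
  by (rule real_polynomial_function.intros(1))
     (rule bounded_linear_compose[OF bounded_linear_vec_nth bounded_linear_vec_nth])

lemma real_polynomial_function_det:
  fixes G :: "'a::real_normed_vector \<Rightarrow> real^'n^'n"
  assumes "\<And>i j. real_polynomial_function (\<lambda>x. G x $ i $ j)"
  shows "real_polynomial_function (\<lambda>x. det (G x))"
  unfolding det_def
  by (intro real_polynomial_function_sum real_polynomial_function.intros(4)
        real_polynomial_function.intros(2) real_polynomial_function_prod assms) auto

lemma matrix_inv_mult:
  fixes A :: "real^'n^'n"
  assumes "invertible A"
  shows matrix_mul_matrix_inv: "A ** matrix_inv A = mat 1"
    and matrix_inv_mul_matrix: "matrix_inv A ** A = mat 1"
proof -
  have "\<exists>A'. A ** A' = mat 1 \<and> A' ** A = mat 1" using assms by (simp add: invertible_def)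
  then have "A ** matrix_inv A = mat 1 \<and> matrix_inv A ** A = mat 1"
    unfolding matrix_inv_def by (rule someI_ex)
  then show "A ** matrix_inv A = mat 1" "matrix_inv A ** A = mat 1" by auto
qed

text \<open>\<^const>\<open>matrix_inv\<close> is defined by choice; Cramer's rule exhibits its entries as
  quotients of polynomials, which are differentiable wherever the determinant is nonzero.\<close>

definition cramer_inv :: "real^'n^'n \<Rightarrow> real^'n^'n" where
  "cramer_inv A =
     (\<chi> i k. det (\<chi> r c. if c = i then (if r = k then 1 else 0) else A $ r $ c) / det A)"

lemma matrix_inv_eq_cramer_inv:
  fixes A :: "real^'n^'n"
  assumes "invertible A"
  shows "matrix_inv A = cramer_inv A"
proof -
  have "matrix_inv A $ i $ k = cramer_inv A $ i $ k" for i k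
  proof -
    define b :: "real^'n" where "b = (\<chi> r. if r = k then 1 else 0)"
    have "A *v (\<chi> i. matrix_inv A $ i $ k) = b"
      using matrix_mul_matrix_inv[OF assms]
      by (simp add: b_def vec_eq_iff matrix_vector_mult_def matrix_matrix_mult_def mat_def)
    from cramer[OF invertible_det_nz[THEN iffD1, OF assms], THEN iffD1, OF this]
    show ?thesis unfolding b_def by (simp add: cramer_inv_def vec_eq_iff cong: if_cong)
  qed
  then show ?thesis by (simp add: vec_eq_iff)
qed

lemma differentiable_cramer_inv:
  fixes G :: "'a::real_normed_vector \<Rightarrow> real^'n^'n"
  assumes G: "\<And>i j. real_polynomial_function (\<lambda>x. G x $ i $ j)" and "det (G a) \<noteq> 0"
  shows "(\<lambda>x. cramer_inv (G x)) differentiable (at a within S)"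
proof (rule differentiable_matrixI)
  fix i k
  have num: "real_polynomial_function
      (\<lambda>x. det (\<chi> r c. if c = i then (if r = k then 1 else 0) else G x $ r $ c))"
  proof (rule real_polynomial_function_det)
    fix r c
    show "real_polynomial_function (\<lambda>x. (\<chi> r c. if c = i then (if r = k then 1 else 0)
        else G x $ r $ c) $ r $ c)"
      by (cases "c = i") (simp_all add: G real_polynomial_function.intros(2))
  qed
  then show "(\<lambda>x. cramer_inv (G x) $ i $ k) differentiable (at a within S)"
    unfolding cramer_inv_def vec_lambda_beta
    by (intro differentiable_divide differentiable_at_real_polynomial_function num
        real_polynomial_function_det G assms(2))
qed

lemma abs_matrix_nth_le_norm: "\<bar>X $ i $ j\<bar> \<le> norm (X :: real^'n^'m)"
  using component_le_norm_cart[of "X $ i" j] Finite_Cartesian_Product.norm_nth_le[of X i]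
  by linarith

lemma norm_matrix_le_sum_abs:
  fixes X :: "real^'n^'m"
  shows "norm X \<le> (\<Sum>i\<in>UNIV. \<Sum>j\<in>UNIV. \<bar>X $ i $ j\<bar>)"
proof -
  have "norm X \<le> (\<Sum>i\<in>UNIV. norm (X $ i))"
    unfolding norm_vec_def by (rule L2_set_le_sum) simp
  also have "\<dots> \<le> (\<Sum>i\<in>UNIV. \<Sum>j\<in>UNIV. \<bar>X $ i $ j\<bar>)"
    by (intro sum_mono norm_le_l1_cart)
  finally show ?thesis .
qed

lemma quadratic_form_congruence:
  fixes A M :: "real^'n^'n"
  shows "x \<bullet> ((transpose A ** M ** A) *v x) = (A *v x) \<bullet> (M *v (A *v x))"
proof -
  have "x \<bullet> ((transpose A ** M ** A) *v x) = x \<bullet> (transpose A *v (M *v (A *v x)))"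
    by (simp add: matrix_vector_mul_assoc matrix_mul_assoc)
  also have "\<dots> = ((M *v (A *v x)) v* A) \<bullet> x" by (simp add: inner_commute)
  also have "\<dots> = (M *v (A *v x)) \<bullet> (A *v x)" by (simp add: dot_lmul_matrix)
  finally show ?thesis by (simp add: inner_commute)
qed

lemma pos_def_near_mat1:
  fixes W :: "real^'n^'n"
  assumes "\<And>i j. \<bar>(W - mat 1) $ i $ j\<bar> \<le> c" and "real CARD('n) * real CARD('n) * c < 1"
    and "x \<noteq> 0"
  shows "x \<bullet> (W *v x) > 0"
proof -
  let ?E = "W - mat 1"
  have "\<bar>x \<bullet> (?E *v x)\<bar> \<le> norm x * norm (?E *v x)" by (rule Cauchy_Schwarz_ineq2)
  also have "\<dots> \<le> norm x * (onorm ((*v) ?E) * norm x)"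
    by (intro mult_left_mono onorm matrix_vector_mul_bounded_linear) simp_all
  also have "\<dots> \<le> norm x * ((real CARD('n) * real CARD('n) * c) * norm x)"
    using onorm_le_matrix_component[of ?E c] assms(1)
    by (intro mult_left_mono mult_right_mono) simp_all
  also have "\<dots> < norm x * (1 * norm x)"
    using assms(2,3) by (intro mult_strict_left_mono mult_strict_right_mono) simp_all
  finally have "\<bar>x \<bullet> (?E *v x)\<bar> < x \<bullet> x"
    by (simp add: power2_norm_eq_inner[symmetric] power2_eq_square)
  moreover have "x \<bullet> (W *v x) = x \<bullet> x + x \<bullet> (?E *v x)"
    by (simp add: matrix_vector_mult_diff_rdistrib inner_diff_right)
  ultimately show ?thesis by linarith
qed

lemma bounded_linear_right_inverse_if_injective:
  fixes f :: "'a::euclidean_space \<Rightarrow> 'a"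
  assumes "linear f" and "\<And>x. f x = 0 \<Longrightarrow> x = 0"
  obtains g where "bounded_linear g" "f \<circ> g = id"
proof -
  have "surj f"
    using assms linear_injective_imp_surjective linear_injective_0 by metis
  then obtain g where "linear g" "f \<circ> g = id"
    using linear_surjective_right_inverse assms(1) by blast
  then show ?thesis using that linear_conv_bounded_linear by blast
qed

section \<open>Dimension via coordinate projections\<close>

lemma proj_has_interior_iff_ball:
  fixes S :: "(real^'v::finite^'v) set"
  shows "proj_has_interior S J \<longleftrightarrow>
    (\<exists>M0\<in>S. \<exists>e>0. \<forall>Y\<in>ball M0 e. \<exists>M\<in>S. \<forall>(i,j)\<in>J. M $ i $ j = Y $ i $ j)"
proof
  assume "proj_has_interior S J"
  then obtain M0 e where "M0 \<in> S" "e > 0" and H: "\<And>f. (\<forall>k\<in>J. \<bar>f k - M0 $ fst k $ snd k\<bar> < e)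
      \<Longrightarrow> \<exists>M\<in>S. \<forall>k\<in>J. M $ fst k $ snd k = f k"
    unfolding proj_has_interior_def by blast
  have "\<exists>M\<in>S. \<forall>(i,j)\<in>J. M $ i $ j = Y $ i $ j" if "Y \<in> ball M0 e" for Y
  proof -
    have "\<bar>Y $ i $ j - M0 $ i $ j\<bar> < e" for i j
      using abs_matrix_nth_le_norm[of "Y - M0" i j] that by (simp add: dist_norm norm_minus_commute)
    then obtain M where "M \<in> S" "\<forall>k\<in>J. M $ fst k $ snd k = Y $ fst k $ snd k"
      using H[of "\<lambda>k. Y $ fst k $ snd k"] by auto
    then show ?thesis by (auto simp: split_beta)
  qed
  with \<open>M0 \<in> S\<close> \<open>e > 0\<close> show "\<exists>M0\<in>S. \<exists>e>0. \<forall>Y\<in>ball M0 e. \<exists>M\<in>S. \<forall>(i,j)\<in>J. M $ i $ j = Y $ i $ j"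
    by blast
next
  assume "\<exists>M0\<in>S. \<exists>e>0. \<forall>Y\<in>ball M0 e. \<exists>M\<in>S. \<forall>(i,j)\<in>J. M $ i $ j = Y $ i $ j"
  then obtain M0 e where "M0 \<in> S" "e > 0"
    and H: "\<And>Y. Y \<in> ball M0 e \<Longrightarrow> \<exists>M\<in>S. \<forall>(i,j)\<in>J. M $ i $ j = Y $ i $ j"
    by blast
  define n where "n = real CARD('v)"
  have "n \<ge> 1" by (simp add: n_def Suc_le_eq)
  define e' where "e' = e / (2 * n * n)"
  have "e' > 0" using \<open>e > 0\<close> \<open>n \<ge> 1\<close> by (simp add: e'_def)
  have "\<exists>M\<in>S. \<forall>k\<in>J. M $ fst k $ snd k = f k"
    if f: "\<forall>k\<in>J. \<bar>f k - M0 $ fst k $ snd k\<bar> < e'" for f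
  proof -
    define Y where "Y = (\<chi> i j. if (i,j) \<in> J then f (i,j) else M0 $ i $ j)"
    have "norm (Y - M0) \<le> (\<Sum>i\<in>UNIV. \<Sum>j\<in>UNIV. \<bar>(Y - M0) $ i $ j\<bar>)"
      by (rule norm_matrix_le_sum_abs)
    also have "\<dots> \<le> (\<Sum>i\<in>(UNIV::'v set). \<Sum>j\<in>(UNIV::'v set). e')"
      using f \<open>e' > 0\<close> by (intro sum_mono) (auto simp: Y_def less_imp_le)
    also have "\<dots> = e / 2" using \<open>n \<ge> 1\<close> by (simp add: e'_def n_def)
    finally have "Y \<in> ball M0 e" using \<open>e > 0\<close> by (simp add: dist_norm norm_minus_commute)
    then show ?thesis using H[of Y] by (force simp: Y_def)
  qed
  with \<open>M0 \<in> S\<close> \<open>e' > 0\<close> show "proj_has_interior S J"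
    unfolding proj_has_interior_def by blast
qed

lemma negligible_matrices_vanishing_off:
  fixes T :: "('m::finite \<times> 'n::finite) set"
  assumes "card T < CARD('m) * CARD('n)"
  shows "negligible {X::real^'n^'m. \<forall>i j. (i,j) \<notin> T \<longrightarrow> X $ i $ j = 0}"
    (is "negligible ?U")
proof (rule negligible_lowdim)
  define W where "W = (\<lambda>(i,j). axis i (axis j 1) :: real^'n^'m) ` T"
  have "?U \<subseteq> span W"
  proof
    fix X assume X: "X \<in> ?U"
    have "X = (\<Sum>u\<in>Basis. (X \<bullet> u) *\<^sub>R u)" by (rule euclidean_representation[symmetric])
    also have "\<dots> \<in> span W"
    proof (rule span_sum)
      fix u :: "real^'n^'m" assume "u \<in> Basis"
      then obtain i j where u: "u = axis i (axis j 1)" by (auto simp: Basis_vec_def)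
      show "(X \<bullet> u) *\<^sub>R u \<in> span W"
      proof (cases "(i,j) \<in> T")
        case True
        then have "u \<in> W" using u by (force simp: W_def)
        then show ?thesis by (intro span_mul span_base)
      next
        case False
        then show ?thesis using X u by (simp add: inner_axis span_zero)
      qed
    qed
    finally show "X \<in> span W" .
  qed
  then have "dim ?U \<le> card W" by (rule dim_le_card) (simp add: W_def)
  also have "\<dots> \<le> card T" unfolding W_def by (rule card_image_le) simp
  finally show "dim ?U < DIM(real^'n^'m)" using assms by (simp add: DIM_cart)
qed

lemma differentiable_on_matrix_patch:
  fixes f :: "real^'n^'m \<Rightarrow> real^'n^'m"
  assumes "f differentiable_on U"
  shows "(\<lambda>X. \<chi> i j. if (i,j) \<in> J then f X $ i $ j else X $ i $ j) differentiable_on U"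
  unfolding differentiable_on_def
proof (intro ballI differentiable_matrixI)
  fix X i j assume "X \<in> U"
  show "(\<lambda>X. (\<chi> i j. if (i,j) \<in> J then f X $ i $ j else X $ i $ j) $ i $ j)
      differentiable (at X within U)"
    using differentiable_matrix_nth[of f] differentiable_matrix_nth[OF differentiable_ident]
      assms \<open>X \<in> U\<close>
    by (cases "(i,j) \<in> J") (simp_all add: differentiable_on_def)
qed

definition reindex ::
    "('m \<times> 'n) set \<Rightarrow> ('m \<times> 'n \<Rightarrow> 'm \<times> 'n) \<Rightarrow> real^'n::finite^'m::finite \<Rightarrow> real^'n^'m"
  where "reindex K \<pi> X = (\<chi> i j. if (i,j) \<in> K then X $ fst (\<pi> (i,j)) $ snd (\<pi> (i,j)) else 0)"

lemma differentiable_reindex: "reindex K \<pi> differentiable (at X within S)"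
proof (rule differentiable_matrixI)
  fix i j
  show "(\<lambda>X. reindex K \<pi> X $ i $ j) differentiable (at X within S)"
    by (cases "(i,j) \<in> K")
       (simp_all add: reindex_def differentiable_at_real_polynomial_function
          real_polynomial_function_matrix_nth)
qed

lemma reindex_surj:
  assumes "inj_on \<pi> K" and "\<And>i j. (i,j) \<notin> K \<Longrightarrow> P $ i $ j = 0"
  shows "\<exists>X. reindex K \<pi> X = P \<and> (\<forall>i j. (i,j) \<notin> \<pi> ` K \<longrightarrow> X $ i $ j = Z $ i $ j)"
proof -
  define X where "X = (\<chi> a b. if (a,b) \<in> \<pi> ` K
    then P $ fst (inv_into K \<pi> (a,b)) $ snd (inv_into K \<pi> (a,b)) else Z $ a $ b)"
  have "reindex K \<pi> X $ i $ j = P $ i $ j" for i j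
  proof (cases "(i,j) \<in> K")
    case True
    then have "\<pi> (i,j) \<in> \<pi> ` K" and "inv_into K \<pi> (\<pi> (i,j)) = (i,j)"
      using inv_into_f_f[OF assms(1)] by auto
    then show ?thesis using True by (simp add: reindex_def X_def)
  next
    case False
    then show ?thesis using assms(2) by (simp add: reindex_def)
  qed
  then have "reindex K \<pi> X = P" by (simp add: vec_eq_iff)
  then show ?thesis by (auto simp: X_def)
qed

text \<open>The projection onto \<open>J\<close> is realised inside one matrix space by a map that is the
  identity off \<open>J\<close> and reads the parameters through an injection of \<open>K\<close> into \<open>J\<close>. Its domain
  has dimension \<open>card K + card (- J) < CARD('v)\<^sup>2\<close>, so its image is negligible.\<close>

lemma proj_has_interior_card_le:
  fixes h :: "real^'v::finite^'v \<Rightarrow> real^'v^'v" and K J :: "('v \<times> 'v) set"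
  assumes h: "h differentiable_on A"
    and A_supp: "\<And>P i j. P \<in> A \<Longrightarrow> (i,j) \<notin> K \<Longrightarrow> P $ i $ j = 0"
    and S: "S \<subseteq> h ` A"
    and J: "proj_has_interior S J"
  shows "card J \<le> card K"
proof (rule ccontr)
  assume "\<not> card J \<le> card K"
  then obtain \<pi> where \<pi>K: "\<pi> ` K \<subseteq> J" and \<pi>: "inj_on \<pi> K"
    using card_le_inj[of K J] by auto
  define T where "T = \<pi> ` K \<union> - J"
  define U where "U = {X. (\<forall>i j. (i,j) \<notin> T \<longrightarrow> X $ i $ j = 0) \<and> reindex K \<pi> X \<in> A}"
  define g where "g X = (\<chi> i j. if (i,j) \<in> J then h (reindex K \<pi> X) $ i $ j else X $ i $ j)" for X
  have "card T \<le> card K + card (- J)"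
    using card_Un_le[of "\<pi> ` K" "- J"] card_image_le[of K \<pi>] by (simp add: T_def)
  also have "\<dots> < CARD('v) * CARD('v)"
    using \<open>\<not> card J \<le> card K\<close> card_Un_disjoint[of J "- J"] by simp
  finally have "negligible U"
    by (rule negligible_subset[OF negligible_matrices_vanishing_off]) (auto simp: U_def)
  moreover have "g differentiable_on U"
  proof -
    have "reindex K \<pi> differentiable_on U"
      by (simp add: differentiable_on_def differentiable_reindex)
    moreover have "h differentiable_on (reindex K \<pi> ` U)"
      using h by (rule differentiable_on_subset) (auto simp: U_def)
    ultimately have "(\<lambda>X. h (reindex K \<pi> X)) differentiable_on U"
      by (rule differentiable_on_compose)
    then show ?thesis
      unfolding g_def by (rule differentiable_on_matrix_patch)
  qed
  ultimately have "negligible (g ` U)"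
    by (intro negligible_differentiable_image_negligible) simp_all
  from J obtain M0 e where "e > 0"
    and H: "\<And>Y. Y \<in> ball M0 e \<Longrightarrow> \<exists>M\<in>S. \<forall>(i,j)\<in>J. M $ i $ j = Y $ i $ j"
    unfolding proj_has_interior_iff_ball by blast
  have "ball M0 e \<subseteq> g ` U"
  proof
    fix Y assume "Y \<in> ball M0 e"
    then obtain M where "M \<in> S" and MY: "\<forall>(i,j)\<in>J. M $ i $ j = Y $ i $ j"
      using H by blast
    then obtain P where "P \<in> A" and "M = h P"
      using S by blast
    define Z where "Z = (\<chi> i j. if (i,j) \<in> J then 0 else Y $ i $ j)"
    obtain X where XP: "reindex K \<pi> X = P" and XZ: "\<And>i j. (i,j) \<notin> \<pi> ` K \<Longrightarrow> X $ i $ j = Z $ i $ j"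
      using reindex_surj[OF \<pi> A_supp[OF \<open>P \<in> A\<close>], of Z] by blast
    have "X $ i $ j = 0" if "(i,j) \<notin> T" for i j
      using XZ[of i j] that by (simp add: T_def Z_def)
    with XP \<open>P \<in> A\<close> have "X \<in> U" by (simp add: U_def)
    moreover have "g X $ i $ j = Y $ i $ j" for i j
    proof (cases "(i,j) \<in> J")
      case True
      then show ?thesis using MY by (auto simp: g_def XP \<open>M = h P\<close>)
    next
      case False
      then have "(i,j) \<notin> \<pi> ` K" using \<pi>K by blast
      with False show ?thesis using XZ[of i j] by (simp add: g_def Z_def)
    qed
    then have "g X = Y" by (simp add: vec_eq_iff)
    ultimately show "Y \<in> g ` U" by blast
  qed
  then have "negligible (ball M0 e)"
    using \<open>negligible (g ` U)\<close> negligible_subset by blast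
  with \<open>e > 0\<close> show False
    using open_not_negligible[OF open_ball] by (metis ball_eq_empty not_le)
qed

lemma sa_dim_eqI:
  fixes S :: "(real^'v::finite^'v) set"
  assumes "proj_has_interior S I" and "\<And>J. proj_has_interior S J \<Longrightarrow> card J \<le> card I"
  shows "sa_dim S = card I"
  unfolding sa_dim_def using assms by (intro Greatest_equality) auto

section \<open>Mixed graph models\<close>

lemma simple_mixed_graph_arcD:
  assumes "simple_mixed_graph D B" "(i,j) \<in> D"
  shows "i \<noteq> j" "(j,i) \<notin> D" "{i,j} \<notin> B" "{j,i} \<notin> B"
  using assms by (auto simp: simple_mixed_graph_def insert_commute)

lemma simple_mixed_graph_edgeE:
  assumes "simple_mixed_graph D B" "e \<in> B"
  obtains i j where "i \<noteq> j" "e = {i,j}"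
  using assms by (auto simp: simple_mixed_graph_def)

definition oriented_edges :: "'v set set \<Rightarrow> ('v \<Rightarrow> nat) \<Rightarrow> ('v \<times> 'v) set" where
  "oriented_edges B r = {(i,j). {i,j} \<in> B \<and> r i < r j}"

lemma card_oriented_edges:
  fixes B :: "'v::finite set set"
  assumes "simple_mixed_graph D B" and "inj r"
  shows "card (oriented_edges B r) = card B"
proof (rule bij_betw_same_card[of "\<lambda>(i,j). {i,j}"], rule bij_betw_imageI)
  show "inj_on (\<lambda>(i,j). {i,j}) (oriented_edges B r)"
    by (auto simp: oriented_edges_def inj_on_def doubleton_eq_iff)
  show "(\<lambda>(i,j). {i,j}) ` oriented_edges B r = B"
  proof
    show "(\<lambda>(i,j). {i,j}) ` oriented_edges B r \<subseteq> B" by (auto simp: oriented_edges_def)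
    show "B \<subseteq> (\<lambda>(i,j). {i,j}) ` oriented_edges B r"
    proof
      fix e assume "e \<in> B"
      obtain i j where "i \<noteq> j" "e = {i,j}"
        using simple_mixed_graph_edgeE[OF assms(1) \<open>e \<in> B\<close>] by blast
      then have "r i < r j \<or> r j < r i" using \<open>inj r\<close> by (metis inj_eq linorder_neqE_nat)
      then show "e \<in> (\<lambda>(i,j). {i,j}) ` oriented_edges B r"
        using \<open>e \<in> B\<close> \<open>e = {i,j}\<close> by (auto simp: oriented_edges_def insert_commute)
    qed
  qed
qed

lemma mat1_in_PD: "(mat 1 :: real^'v::finite^'v) \<in> PD B"
  by (simp add: PD_def matrix_vector_mul_lid) (simp add: mat_def)

text \<open>No invertibility hypothesis is needed: positive definiteness of \<open>(I - L)\<^sup>T M (I - L)\<close>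
  forces \<open>I - L\<close> to be invertible.\<close>

lemma in_modelI:
  fixes L M :: "real^'v::finite^'v"
  assumes L: "L \<in> RD D" and W: "transpose (mat 1 - L) ** M ** (mat 1 - L) \<in> PD B"
  shows "M \<in> model D B"
proof -
  let ?A = "mat 1 - L"
  let ?W = "transpose ?A ** M ** ?A"
  have "inj ((*v) ?A)"
  proof (rule injI)
    fix x y assume "?A *v x = ?A *v y"
    then have "?A *v (x - y) = 0" by (simp add: matrix_vector_mult_diff_distrib)
    then have "(x - y) \<bullet> (?W *v (x - y)) = 0" by (simp add: quadratic_form_congruence)
    moreover have "z \<noteq> 0 \<Longrightarrow> z \<bullet> (?W *v z) > 0" for z using W by (simp add: PD_def)
    ultimately show "x = y" by (metis less_irrefl right_minus_eq)
  qed
  then have inv: "invertible ?A"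
    using invertible_left_inverse matrix_left_invertible_injective by blast
  let ?Ai = "matrix_inv ?A"
  have "transpose ?Ai ** ?W ** ?Ai = (transpose ?Ai ** transpose ?A) ** M ** (?A ** ?Ai)"
    by (simp add: matrix_mul_assoc)
  also have "\<dots> = M"
    by (simp add: matrix_transpose_mul[symmetric] matrix_mul_matrix_inv[OF inv]
        matrix_inv_mul_matrix[OF inv] matrix_mul_lid matrix_mul_rid)
  finally show ?thesis
    using L W inv unfolding model_def RD_reg_def by (metis (mono_tags, lifting) mem_Collect_eq)
qed

section \<open>A parametrization by \<open>|V| + |D| + |B|\<close> entries\<close>

definition lambda_part :: "('v \<times> 'v) set \<Rightarrow> real^'v::finite^'v \<Rightarrow> real^'v^'v" where
  "lambda_part D X = (\<chi> i j. if (i,j) \<in> D then X $ i $ j else 0)"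

lemma lambda_part_in_RD: "lambda_part D X \<in> RD D"
  by (simp add: RD_def lambda_part_def)

lemma real_polynomial_function_mat1_minus_lambda_part:
  "real_polynomial_function (\<lambda>X. (mat 1 - lambda_part D X) $ i $ j)"
  by (cases "(i,j) \<in> D")
     (simp_all add: lambda_part_def real_polynomial_function_matrix_nth
        real_polynomial_function_diff real_polynomial_function.intros(2))

definition omega_part :: "'v set set \<Rightarrow> ('v \<Rightarrow> nat) \<Rightarrow> real^'v::finite^'v \<Rightarrow> real^'v^'v" where
  "omega_part B r X = (\<chi> i j. if i = j then X $ i $ i
      else if (i,j) \<in> oriented_edges B r then X $ i $ j
      else if (j,i) \<in> oriented_edges B r then X $ j $ i else 0)"

definition param_coords :: "('v \<times> 'v) set \<Rightarrow> 'v set set \<Rightarrow> ('v \<Rightarrow> nat) \<Rightarrow> ('v \<times> 'v) set" where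
  "param_coords D B r = D \<union> range (\<lambda>i. (i,i)) \<union> oriented_edges B r"

definition model_param ::
    "('v \<times> 'v) set \<Rightarrow> 'v set set \<Rightarrow> ('v \<Rightarrow> nat) \<Rightarrow> real^'v::finite^'v \<Rightarrow> real^'v^'v" where
  "model_param D B r X = transpose (cramer_inv (mat 1 - lambda_part D X)) ** omega_part B r X
      ** cramer_inv (mat 1 - lambda_part D X)"

definition param_domain ::
    "('v \<times> 'v) set \<Rightarrow> 'v set set \<Rightarrow> ('v \<Rightarrow> nat) \<Rightarrow> (real^'v::finite^'v) set" where "param_domain D B r = {P. (\<forall>i j. (i,j) \<notin> param_coords D B r \<longrightarrow> P $ i $ j = 0)
    \<and> det (mat 1 - lambda_part D P) \<noteq> 0}"

lemma differentiable_model_param: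
  assumes "det (mat 1 - lambda_part D X) \<noteq> 0"
  shows "model_param D B r differentiable (at X within S)"
proof -
  have Ainv: "(\<lambda>X. cramer_inv (mat 1 - lambda_part D X)) differentiable (at X within S)"
    by (rule differentiable_cramer_inv[OF real_polynomial_function_mat1_minus_lambda_part assms])
  have "omega_part B r differentiable (at X within S)"
  proof (rule differentiable_matrixI)
    fix i j
    show "(\<lambda>X. omega_part B r X $ i $ j) differentiable (at X within S)"
      unfolding omega_part_def vec_lambda_beta
      by (cases "i = j"; cases "(i,j) \<in> oriented_edges B r"; cases "(j,i) \<in> oriented_edges B r")
         (simp_all add: differentiable_at_real_polynomial_function
            real_polynomial_function_matrix_nth)
  qed
  then show ?thesis unfolding model_param_def[abs_def]
    by (intro differentiable_matrix_mult differentiable_transpose Ainv)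
qed

lemma omega_part_eqI:
  assumes "inj r" and W: "W \<in> PD B"
    and XW: "\<And>i j. i = j \<or> (i,j) \<in> oriented_edges B r \<Longrightarrow> X $ i $ j = W $ i $ j"
  shows "omega_part B r X = W"
proof -
  have "omega_part B r X $ i $ j = W $ i $ j" for i j
  proof -
    have "transpose W $ i $ j = W $ i $ j" using W by (simp add: PD_def)
    then have W_sym: "W $ j $ i = W $ i $ j" by (simp add: transpose_def)
    have ne: "r i = r j \<Longrightarrow> i = j" using \<open>inj r\<close> by (simp add: inj_eq)
    consider "i = j" | "i \<noteq> j" "{i,j} \<notin> B" | "(i,j) \<in> oriented_edges B r"
      | "(j,i) \<in> oriented_edges B r" "(i,j) \<notin> oriented_edges B r" "i \<noteq> j"
      by (cases "r i < r j"; cases "r j < r i")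
         (use ne in \<open>auto simp: oriented_edges_def insert_commute\<close>)
    then show ?thesis
    proof cases
      case 2
      then have "(i,j) \<notin> oriented_edges B r" "(j,i) \<notin> oriented_edges B r"
        by (auto simp: oriented_edges_def insert_commute)
      then show ?thesis using 2 W by (simp add: omega_part_def PD_def)
    qed (use XW W_sym in \<open>simp_all add: omega_part_def\<close>)
  qed
  then show ?thesis by (simp add: vec_eq_iff)
qed

lemma model_subset_model_param_image:
  fixes D :: "('v::finite \<times> 'v) set"
  assumes sg: "simple_mixed_graph D B" and "inj r"
  shows "model D B \<subseteq> model_param D B r ` param_domain D B r"
proof
  fix M assume "M \<in> model D B"
  then obtain L W where L: "L \<in> RD_reg D" and W: "W \<in> PD B"
    and M: "M = transpose (matrix_inv (mat 1 - L)) ** W ** matrix_inv (mat 1 - L)"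
    unfolding model_def by blast
  define P where "P = (\<chi> i j. if (i,j) \<in> D then L $ i $ j
    else if (i,j) \<in> param_coords D B r then W $ i $ j else 0)"
  have inv: "invertible (mat 1 - L)" using L by (simp add: RD_reg_def)
  have lam: "lambda_part D P = L"
    using L by (auto simp: lambda_part_def P_def vec_eq_iff RD_reg_def RD_def)
  have "P $ i $ j = W $ i $ j" if "i = j \<or> (i,j) \<in> oriented_edges B r" for i j
  proof -
    have "(i,j) \<notin> D"
      using that simple_mixed_graph_arcD(1,3)[OF sg, of i j] by (auto simp: oriented_edges_def)
    with that show ?thesis by (auto simp: P_def param_coords_def)
  qed
  then have "omega_part B r P = W" by (rule omega_part_eqI[OF \<open>inj r\<close> W])
  with lam have "model_param D B r P = M"
    by (simp add: model_param_def M matrix_inv_eq_cramer_inv[OF inv])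
  moreover have "det (mat 1 - lambda_part D P) \<noteq> 0"
    using inv lam by (simp add: invertible_det_nz)
  ultimately show "M \<in> model_param D B r ` param_domain D B r"
    by (force simp: param_domain_def P_def param_coords_def)
qed

lemma card_param_coords_le:
  fixes D :: "('v::finite \<times> 'v) set" and r :: "'v \<Rightarrow> nat"
  assumes "simple_mixed_graph D B" and "inj r"
  shows "card (param_coords D B r) \<le> CARD('v) + card D + card B"
proof -
  have "card (param_coords D B r) \<le> card (D \<union> range (\<lambda>i::'v. (i,i))) + card (oriented_edges B r)"
    unfolding param_coords_def by (rule card_Un_le)
  also have "\<dots> \<le> card D + card (range (\<lambda>i::'v. (i,i))) + card (oriented_edges B r)"
    using card_Un_le by simp
  also have "card (range (\<lambda>i::'v. (i,i))) \<le> CARD('v)" by (rule card_image_le) simp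
  finally show ?thesis using card_oriented_edges[OF assms] by simp
qed

lemma proj_has_interior_model_card_le:
  fixes D :: "('v::finite \<times> 'v) set" and r :: "'v \<Rightarrow> nat"
  assumes "simple_mixed_graph D B" and "inj r" and "proj_has_interior (model D B) J"
  shows "card J \<le> CARD('v) + card D + card B"
proof -
  have "model_param D B r differentiable_on param_domain D B r"
    by (auto simp: differentiable_on_def param_domain_def intro: differentiable_model_param)
  moreover have "P $ i $ j = 0" if "P \<in> param_domain D B r" "(i,j) \<notin> param_coords D B r" for P i j
    using that by (simp add: param_domain_def)
  ultimately have "card J \<le> card (param_coords D B r)"
    using model_subset_model_param_image[OF assms(1,2)] assms(3) by (rule proj_has_interior_card_le)
  with card_param_coords_le[OF assms(1,2)] show ?thesis by linarith
qed

section \<open>Local surjectivity at the identity\<close>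

text \<open>A single matrix \<open>X\<close> encodes both \<open>\<Lambda>\<close> (its entries on \<open>D\<close>) and a symmetric matrix
  \<open>\<Sigma> = sym_matrix D r X\<close>: the common value \<open>\<Sigma>\<^sub>i\<^sub>j = \<Sigma>\<^sub>j\<^sub>i\<close> is stored at
  \<open>pair_rep D r i j\<close>, which is \<open>(j,i)\<close> for a directed edge \<open>i \<rightarrow> j\<close> and the \<open>r\<close>-increasing
  position otherwise. \<open>constraint_map\<close> overwrites the entries at
  \<open>constraint_coords\<close>, where \<open>\<Omega> = omega_of D r X\<close> has to vanish, by those entries of
  \<open>\<Omega>\<close>; the entries at \<open>free_coords\<close> are the prescribed coordinates of \<open>\<Sigma>\<close>.\<close>

definition pair_rep :: "('v \<times> 'v) set \<Rightarrow> ('v \<Rightarrow> nat) \<Rightarrow> 'v \<Rightarrow> 'v \<Rightarrow> 'v \<times> 'v" where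
  "pair_rep D r i j = (if (i,j) \<in> D then (j,i) else if (j,i) \<in> D then (i,j)
                       else if r i \<le> r j then (i,j) else (j,i))"

definition sym_matrix :: "('v \<times> 'v) set \<Rightarrow> ('v \<Rightarrow> nat) \<Rightarrow> real^'v::finite^'v \<Rightarrow> real^'v^'v" where
  "sym_matrix D r X = (\<chi> i j. X $ fst (pair_rep D r i j) $ snd (pair_rep D r i j))"

definition omega_of :: "('v \<times> 'v) set \<Rightarrow> ('v \<Rightarrow> nat) \<Rightarrow> real^'v::finite^'v \<Rightarrow> real^'v^'v" where
  "omega_of D r X =
     transpose (mat 1 - lambda_part D X) ** sym_matrix D r X ** (mat 1 - lambda_part D X)"

definition constraint_coords :: "('v \<times> 'v) set \<Rightarrow> 'v set set \<Rightarrow> ('v \<Rightarrow> nat) \<Rightarrow> ('v \<times> 'v) set" where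
  "constraint_coords D B r =
     D \<union> {(i,j). i \<noteq> j \<and> (i,j) \<notin> D \<and> (j,i) \<notin> D \<and> {i,j} \<notin> B \<and> r i < r j}"

definition constraint_map ::
    "('v \<times> 'v) set \<Rightarrow> 'v set set \<Rightarrow> ('v \<Rightarrow> nat) \<Rightarrow> real^'v::finite^'v \<Rightarrow> real^'v^'v" where
  "constraint_map D B r X =
     (\<chi> i j. if (i,j) \<in> constraint_coords D B r then omega_of D r X $ i $ j else X $ i $ j)"

definition constraint_map_deriv ::
    "('v \<times> 'v) set \<Rightarrow> 'v set set \<Rightarrow> ('v \<Rightarrow> nat) \<Rightarrow> real^'v::finite^'v \<Rightarrow> real^'v^'v" where
  "constraint_map_deriv D B r H = (\<chi> i j. if (i,j) \<in> constraint_coords D B r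
     then (sym_matrix D r H - lambda_part D H - transpose (lambda_part D H)) $ i $ j
     else H $ i $ j)"

definition free_coords :: "('v \<times> 'v) set \<Rightarrow> 'v set set \<Rightarrow> ('v \<Rightarrow> nat) \<Rightarrow> ('v \<times> 'v) set" where
  "free_coords D B r = range (\<lambda>i. (i,i)) \<union> D\<inverse> \<union> oriented_edges B r"

lemma has_derivative_lambda_part: "(lambda_part D has_derivative lambda_part D) (at a within S)"
proof (rule has_derivative_matrixI)
  fix i j
  show "((\<lambda>X. lambda_part D X $ i $ j) has_derivative (\<lambda>H. lambda_part D H $ i $ j))
      (at a within S)"
    by (cases "(i,j) \<in> D")
       (simp_all add: lambda_part_def has_derivative_matrix_nth[OF has_derivative_ident])
qed

lemma has_derivative_sym_matrix: "(sym_matrix D r has_derivative sym_matrix D r) (at a within S)"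
  by (rule has_derivative_matrixI)
     (simp add: sym_matrix_def has_derivative_matrix_nth[OF has_derivative_ident])

lemma has_derivative_mat1_minus_lambda_part:
  "((\<lambda>X. mat 1 - lambda_part D X) has_derivative (\<lambda>H. - lambda_part D H)) (at a within S)"
  using has_derivative_diff[OF has_derivative_const has_derivative_lambda_part, of "mat 1" D a S]
  by simp

lemma has_derivative_omega_of:
  "(omega_of D r has_derivative (\<lambda>H. (transpose (mat 1 - lambda_part D a) ** sym_matrix D r a)
       ** (- lambda_part D H) + (transpose (mat 1 - lambda_part D a) ** sym_matrix D r H
       + transpose (- lambda_part D H) ** sym_matrix D r a) ** (mat 1 - lambda_part D a)))
     (at a within S)"
  unfolding omega_of_def
  by (intro has_derivative_matrix_mult has_derivative_transpose
      has_derivative_mat1_minus_lambda_part has_derivative_sym_matrix)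

lemma lambda_part_mat1: "\<forall>(i,j)\<in>D. i \<noteq> j \<Longrightarrow> lambda_part D (mat 1) = 0"
  by (auto simp: lambda_part_def vec_eq_iff mat_def)

lemma sym_matrix_mat1: "sym_matrix D r (mat 1 :: real^'v::finite^'v) = mat 1"
  by (auto simp: sym_matrix_def pair_rep_def vec_eq_iff mat_def)

lemma omega_of_mat1: "\<forall>(i,j)\<in>D. i \<noteq> j \<Longrightarrow> omega_of D r (mat 1) = mat 1"
  by (simp add: omega_of_def lambda_part_mat1 sym_matrix_mat1 matrix_mul_lid matrix_mul_rid)

lemma constraint_map_mat1: "\<forall>(i,j)\<in>D. i \<noteq> j \<Longrightarrow> constraint_map D B r (mat 1) = mat 1"
  by (simp add: constraint_map_def omega_of_mat1 vec_eq_iff)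

lemma has_derivative_constraint_map_mat1:
  assumes "\<forall>(i,j)\<in>D. i \<noteq> j"
  shows "(constraint_map D B r has_derivative constraint_map_deriv D B r) (at (mat 1) within S)"
proof (rule has_derivative_matrixI)
  have "(omega_of D r has_derivative (\<lambda>H. sym_matrix D r H - lambda_part D H
      - transpose (lambda_part D H))) (at (mat 1) within S)"
    using has_derivative_omega_of[of D r "mat 1" S]
    by (simp add: lambda_part_mat1[OF assms] sym_matrix_mat1 transpose_uminus
        matrix_mul_lid matrix_mul_rid algebra_simps)
  from has_derivative_matrix_nth[OF this]
  show "((\<lambda>X. constraint_map D B r X $ i $ j) has_derivative
      (\<lambda>H. constraint_map_deriv D B r H $ i $ j)) (at (mat 1) within S)" for i j
    by (cases "(i,j) \<in> constraint_coords D B r")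
       (simp_all add: constraint_map_def constraint_map_deriv_def
          has_derivative_matrix_nth[OF has_derivative_ident])
qed

lemma differentiable_on_constraint_map: "constraint_map D B r differentiable_on S"
  unfolding constraint_map_def[abs_def]
  by (rule differentiable_on_matrix_patch)
     (auto simp: differentiable_on_def differentiable_def intro: has_derivative_omega_of)

lemma pair_rep_commute:
  assumes sg: "simple_mixed_graph D B" and "inj r"
  shows "pair_rep D r i j = pair_rep D r j i"
proof -
  have "r i = r j \<Longrightarrow> i = j" using \<open>inj r\<close> by (simp add: inj_eq)
  then show ?thesis
    by (auto dest: simple_mixed_graph_arcD[OF sg] simp: pair_rep_def)
qed

lemma transpose_sym_matrix:
  assumes "simple_mixed_graph D B" and "inj r"
  shows "transpose (sym_matrix D r X) = sym_matrix D r X"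
  using pair_rep_commute[OF assms] by (simp add: sym_matrix_def transpose_def vec_eq_iff)

lemma pair_rep_free_coords:
  assumes sg: "simple_mixed_graph D B" and "(i,j) \<in> free_coords D B r"
  shows "pair_rep D r i j = (i,j)"
proof -
  from assms(2) consider "i = j" | "(j,i) \<in> D" | "{i,j} \<in> B" "r i < r j"
    by (auto simp: free_coords_def oriented_edges_def)
  then show ?thesis
    by cases (auto dest: simple_mixed_graph_arcD[OF sg] simp: pair_rep_def insert_commute)
qed

lemma constraint_coords_not_free:
  assumes sg: "simple_mixed_graph D B" and "(i,j) \<in> constraint_coords D B r"
  shows "(i,j) \<notin> free_coords D B r" and "i \<noteq> j"
proof -
  have "i \<noteq> j \<and> (j,i) \<notin> D \<and> {i,j} \<notin> B"
    using assms(2) simple_mixed_graph_arcD[OF sg, of i j] by (auto simp: constraint_coords_def)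
  then show "(i,j) \<notin> free_coords D B r" and "i \<noteq> j"
    by (auto simp: free_coords_def oriented_edges_def)
qed

lemma constraint_coords_cover:
  assumes "inj r" and "i \<noteq> j" and "{i,j} \<notin> B"
  shows "(i,j) \<in> constraint_coords D B r \<or> (j,i) \<in> constraint_coords D B r"
proof -
  have "r i \<noteq> r j" using assms(1,2) by (simp add: inj_eq)
  then show ?thesis using assms(2,3) by (auto simp: constraint_coords_def insert_commute)
qed

text \<open>The derivative is triangular: a constrained entry of \<open>H\<close> in \<open>D\<close> is determined by the
  entry at the transposed position, which is unconstrained, and every other constrained entry
  is read off directly.\<close>

lemma constraint_map_deriv_eq_0_iff:
  fixes D :: "('v::finite \<times> 'v) set"
  assumes sg: "simple_mixed_graph D B" and "inj r"
  shows "constraint_map_deriv D B r H = 0 \<longleftrightarrow> H = 0"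
proof
  assume H0: "constraint_map_deriv D B r H = 0"
  let ?C = "constraint_coords D B r"
  have entry: "(if (i,j) \<in> ?C then (sym_matrix D r H - lambda_part D H
      - transpose (lambda_part D H)) $ i $ j else H $ i $ j) = 0" for i j
    using H0 by (simp add: constraint_map_deriv_def vec_eq_iff)
  have off: "H $ i $ j = 0" if "(i,j) \<notin> ?C" for i j
    using entry[of i j] that by simp
  have "H $ i $ j = 0" for i j
  proof (cases "(i,j) \<in> ?C")
    case False
    then show ?thesis by (rule off)
  next
    case C: True
    show ?thesis
    proof (cases "(i,j) \<in> D")
      case True
      note ij = simple_mixed_graph_arcD[OF sg True]
      then have "H $ j $ i = 0" using True by (intro off) (auto simp: constraint_coords_def)
      then show ?thesis
        using entry[of i j] True ij C
        by (simp add: sym_matrix_def pair_rep_def lambda_part_def transpose_def)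
    next
      case False
      with C have "i \<noteq> j" "(j,i) \<notin> D" "r i < r j" by (auto simp: constraint_coords_def)
      then show ?thesis
        using entry[of i j] C False
        by (simp add: sym_matrix_def pair_rep_def lambda_part_def transpose_def)
    qed
  qed
  then show "H = 0" by (simp add: vec_eq_iff)
next
  assume "H = 0"
  then show "constraint_map_deriv D B r H = 0"
    by (simp add: constraint_map_deriv_def sym_matrix_def lambda_part_def transpose_def vec_eq_iff)
qed

lemma mat1_in_interior_constraint_map_image:
  fixes D :: "('v::finite \<times> 'v) set"
  assumes sg: "simple_mixed_graph D B" and "inj r" and "\<rho> > 0"
  shows "mat 1 \<in> interior (constraint_map D B r ` ball (mat 1) \<rho>)"
proof -
  have irr: "\<forall>(i,j)\<in>D. i \<noteq> j" using sg by (auto simp: simple_mixed_graph_def)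
  note deriv = has_derivative_constraint_map_mat1[OF irr, of B r UNIV]
  then have "linear (constraint_map_deriv D B r)"
    using has_derivative_linear by blast
  then obtain g' where "bounded_linear g'" "constraint_map_deriv D B r \<circ> g' = id"
    using constraint_map_deriv_eq_0_iff[OF sg \<open>inj r\<close>] bounded_linear_right_inverse_if_injective
    by metis
  moreover have "continuous_on UNIV (constraint_map D B r)"
    by (rule differentiable_imp_continuous_on[OF differentiable_on_constraint_map])
  ultimately have "constraint_map D B r (mat 1) \<in> interior (constraint_map D B r ` ball (mat 1) \<rho>)"
    using \<open>\<rho> > 0\<close> by (intro sussmann_open_mapping[OF open_UNIV _ _ deriv]) auto
  then show ?thesis by (simp add: constraint_map_mat1[OF irr])
qed

lemma omega_of_pos_def_near_mat1:
  fixes D :: "('v::finite \<times> 'v) set"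
  assumes "\<forall>(i,j)\<in>D. i \<noteq> j"
  obtains \<rho> where "\<rho> > 0"
    and "\<And>X x. X \<in> ball (mat 1) \<rho> \<Longrightarrow> x \<noteq> 0 \<Longrightarrow> x \<bullet> (omega_of D r X *v x) > 0"
proof -
  define c where "c = 1 / (2 * real CARD('v) * real CARD('v))"
  have "c > 0" and nnc: "real CARD('v) * real CARD('v) * c < 1" by (simp_all add: c_def)
  have "isCont (omega_of D r) (mat 1)"
    using has_derivative_omega_of has_derivative_continuous by blast
  then obtain \<rho> where "\<rho> > 0" and
     \<rho>: "\<And>X. dist X (mat 1) < \<rho> \<Longrightarrow> dist (omega_of D r X) (mat 1) < c"
    using \<open>c > 0\<close> omega_of_mat1[OF assms] unfolding continuous_at_eps_delta by metis
  have "x \<bullet> (omega_of D r X *v x) > 0" if "X \<in> ball (mat 1) \<rho>" "x \<noteq> 0" for X x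
  proof (rule pos_def_near_mat1[OF _ nnc \<open>x \<noteq> 0\<close>])
    fix i j
    show "\<bar>(omega_of D r X - mat 1) $ i $ j\<bar> \<le> c"
      using abs_matrix_nth_le_norm[of "omega_of D r X - mat 1" i j] \<rho>[of X] that(1)
      by (simp add: dist_norm norm_minus_commute)
  qed
  with \<open>\<rho> > 0\<close> show ?thesis using that by blast
qed

lemma sym_matrix_in_model:
  fixes D :: "('v::finite \<times> 'v) set"
  assumes sg: "simple_mixed_graph D B" and "inj r"
    and pos: "\<And>x. x \<noteq> 0 \<Longrightarrow> x \<bullet> (omega_of D r X *v x) > 0"
    and C0: "\<And>i j. (i,j) \<in> constraint_coords D B r \<Longrightarrow> omega_of D r X $ i $ j = 0"
  shows "sym_matrix D r X \<in> model D B"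
proof (rule in_modelI[OF lambda_part_in_RD])
  let ?W = "omega_of D r X"
  have sym: "transpose ?W = ?W"
    by (simp add: omega_of_def matrix_transpose_mul transpose_sym_matrix[OF assms(1,2)]
        matrix_mul_assoc)
  have "?W $ i $ j = 0" if "i \<noteq> j" "{i,j} \<notin> B" for i j
  proof -
    have "?W $ i $ j = ?W $ j $ i" using sym by (metis transpose_def vec_lambda_beta)
    then show ?thesis using constraint_coords_cover[OF \<open>inj r\<close> that] C0 by metis
  qed
  with sym pos have "?W \<in> PD B" by (simp add: PD_def)
  then show "transpose (mat 1 - lambda_part D X) ** sym_matrix D r X ** (mat 1 - lambda_part D X)
      \<in> PD B"
    by (simp add: omega_of_def)
qed

lemma proj_has_interior_model_free_coords:
  fixes D :: "('v::finite \<times> 'v) set"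
  assumes sg: "simple_mixed_graph D B" and "inj r"
  shows "proj_has_interior (model D B) (free_coords D B r)"
proof -
  have irr: "\<forall>(i,j)\<in>D. i \<noteq> j" using sg by (auto simp: simple_mixed_graph_def)
  obtain \<rho> where "\<rho> > 0"
    and pos: "\<And>X x. X \<in> ball (mat 1) \<rho> \<Longrightarrow> x \<noteq> 0 \<Longrightarrow> x \<bullet> (omega_of D r X *v x) > 0"
    using omega_of_pos_def_near_mat1[OF irr] by blast
  obtain \<delta> where "\<delta> > 0" and \<delta>: "ball (mat 1) \<delta> \<subseteq> constraint_map D B r ` ball (mat 1) \<rho>"
    using mat1_in_interior_constraint_map_image[OF sg \<open>inj r\<close> \<open>\<rho> > 0\<close>] by (auto simp: mem_interior)
  have "mat 1 \<in> model D B"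
    using in_modelI[of 0 D "mat 1" B] by (simp add: RD_def mat1_in_PD matrix_mul_lid matrix_mul_rid)
  moreover have "\<exists>M\<in>model D B. \<forall>(i,j)\<in>free_coords D B r. M $ i $ j = Y $ i $ j"
    if Y: "Y \<in> ball (mat 1) \<delta>" for Y
  proof -
    define Y' where "Y' = (\<chi> i j. if (i,j) \<in> free_coords D B r then Y $ i $ j else mat 1 $ i $ j)"
    have "norm (Y' - mat 1) \<le> norm (Y - mat 1)"
      by (intro norm_le_componentwise_cart) (simp add: Y'_def)
    then have "Y' \<in> ball (mat 1) \<delta>" using Y by (simp add: dist_norm norm_minus_commute)
    then obtain X where X: "X \<in> ball (mat 1) \<rho>" and XY: "constraint_map D B r X = Y'"
      using \<delta> by blast
    have C0: "omega_of D r X $ i $ j = 0" if "(i,j) \<in> constraint_coords D B r" for i j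
      using arg_cong[OF XY, of "\<lambda>M. M $ i $ j"] constraint_coords_not_free[OF sg that] that
      by (simp add: constraint_map_def Y'_def mat_def)
    have "sym_matrix D r X $ i $ j = Y $ i $ j" if "(i,j) \<in> free_coords D B r" for i j
    proof -
      have "(i,j) \<notin> constraint_coords D B r"
        using constraint_coords_not_free(1)[OF sg] that by blast
      then show ?thesis
        using arg_cong[OF XY, of "\<lambda>M. M $ i $ j"] that pair_rep_free_coords[OF sg that]
        by (simp add: sym_matrix_def constraint_map_def Y'_def)
    qed
    then show ?thesis
      using sym_matrix_in_model[OF sg \<open>inj r\<close> pos[OF X] C0] by blast
  qed
  ultimately show ?thesis
    unfolding proj_has_interior_iff_ball using \<open>\<delta> > 0\<close> by blast
qed

lemma card_free_coords:
  fixes D :: "('v::finite \<times> 'v) set" and r :: "'v \<Rightarrow> nat"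
  assumes sg: "simple_mixed_graph D B" and "inj r"
  shows "card (free_coords D B r) = CARD('v) + card D + card B"
proof -
  have "card (range (\<lambda>i::'v. (i,i))) = CARD('v)" by (rule card_image) (simp add: inj_on_def)
  moreover have "card (D\<inverse>) = card D"
  proof -
    have "D\<inverse> = prod.swap ` D" by auto
    then show ?thesis by (simp add: card_image)
  qed
  moreover have "range (\<lambda>i. (i,i)) \<inter> D\<inverse> = {}"
    and "(range (\<lambda>i. (i,i)) \<union> D\<inverse>) \<inter> oriented_edges B r = {}"
    using simple_mixed_graph_arcD[OF sg] by (auto simp: oriented_edges_def)
  ultimately show ?thesis
    unfolding free_coords_def using card_oriented_edges[OF assms]
    by (simp add: card_Un_disjoint)
qed

theorem theorem1:
  fixes D :: "('v::finite \<times> 'v) set" and B :: "'v set set"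
  assumes "simple_mixed_graph D B"
  shows "sa_dim (model D B) = CARD('v) + card D + card B"
proof -
  obtain r :: "'v \<Rightarrow> nat" where "inj r"
    using finite_imp_inj_to_nat_seg[of "UNIV :: 'v set"] by auto
  have "sa_dim (model D B) = card (free_coords D B r)"
    using proj_has_interior_model_free_coords[OF assms \<open>inj r\<close>]
      proj_has_interior_model_card_le[OF assms \<open>inj r\<close>] card_free_coords[OF assms \<open>inj r\<close>]
    by (intro sa_dim_eqI) auto
  with card_free_coords[OF assms \<open>inj r\<close>] show ?thesis by simp
qed

end
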